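(* Let $A\in\mathbb{R}^{m\times n}$ have rank $r\ge 1$, and let $S$ be an ordered subset of $r$ elements of $\{1,\dots,m\}$ such that the rows of $A$ indexed by $S$ are linearly independent. Let $\epsilon\ge 0$ and let $T$ be an ordered subset of $r$ elements of $\{1,\dots,n\}$ such that $A[S,T]$ is a $(1+\epsilon)$-local maximizer for the absolute determinant on the set of $r\times r$ nonsingular submatrices of $A[S,:]$. Let $\hat A:=A[:,T]$ and let $H\in\mathbb{R}^{n\times m}$ be the matrix whose rows indexed by $T$ are given by $\hat A^+=(\hat A^\top\hat A)^{-1}\hat A^\top$ and whose other rows are zero. Then $H$ is an ah-symmetric reflexive generalized inverse of $A$ satisfying $\|H\|_1\le r(1+\epsilon)\|H^r_{opt}\|_1$, where $H^r_{opt}$ is an ah-symmetric reflexive generalized inverse of $A$ of minimum 1-norm.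
   Context: $A[S,T]$ is the submatrix with row indices $S$ and column indices $T$; $A[S,:]$ (resp. $A[:,T]$) is the submatrix formed by rows $S$ (resp. columns $T$). $\|H\|_1=\sum_{i,j}|H_{ij}|$. $H$ is a generalized inverse of $A$ if $AHA=A$, reflexive if additionally $HAH=H$, and ah-symmetric if $AH$ is symmetric. For fixed $\epsilon\ge0$, $A[S,T]$ is a $(1+\epsilon)$-local maximizer for the absolute determinant on the set of $r\times r$ nonsingular submatrices of $A[S,:]$ if $A[S,T]$ is nonsingular and $|\det(A[S,T])|$ cannot be increased by a factor of more than $1+\epsilon$ by swapping an element of $T$ with one element from its complement in $\{1,\dots,n\}$. *)

theory Defs
  imports "Jordan_Normal_Form.DL_Rank" "Jordan_Normal_Form.Gauss_Jordan_Elimination"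
begin

definition submat :: "'a mat \<Rightarrow> nat list \<Rightarrow> nat list \<Rightarrow> 'a mat" where
  "submat A S T = mat (length S) (length T) (\<lambda>(i,j). A $$ (S ! i, T ! j))"

definition rows_sub :: "'a mat \<Rightarrow> nat list \<Rightarrow> 'a mat" where
  "rows_sub A S = submat A S [0..<dim_col A]"

definition cols_sub :: "'a mat \<Rightarrow> nat list \<Rightarrow> 'a mat" where
  "cols_sub A T = submat A [0..<dim_row A] T"

definition rows_lin_indep :: "real mat \<Rightarrow> nat list \<Rightarrow> bool" where
  "rows_lin_indep A S \<longleftrightarrow> distinct S \<and> (\<forall>c :: nat \<Rightarrow> real.
     (\<forall>j < dim_col A. (\<Sum>k < length S. c k * A $$ (S ! k, j)) = 0) \<longrightarrow> (\<forall>k < length S. c k = 0))"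

definition ordered_subset :: "nat list \<Rightarrow> nat \<Rightarrow> nat \<Rightarrow> bool" where
  "ordered_subset S r n \<longleftrightarrow> distinct S \<and> length S = r \<and> set S \<subseteq> {0..<n}"

definition local_max_det :: "real \<Rightarrow> real mat \<Rightarrow> nat list \<Rightarrow> nat list \<Rightarrow> bool" where
  "local_max_det eps A S T \<longleftrightarrow> det (submat A S T) \<noteq> 0 \<and>
     (\<forall>k < length T. \<forall>j < dim_col A. j \<notin> set T \<longrightarrow>
        \<bar>det (submat A S (T[k := j]))\<bar> \<le> (1 + eps) * \<bar>det (submat A S T)\<bar>)"

(* matrix inverse (only used for nonsingular square matrices) *)
definition mat_inv :: "real mat \<Rightarrow> real mat" where
  "mat_inv M = the (mat_inverse M)"

(* Moore-Penrose pseudoinverse of a full column rank matrix: (B^T B)^{-1} B^T *)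
definition pinv_fcr :: "real mat \<Rightarrow> real mat" where
  "pinv_fcr B = mat_inv (transpose_mat B * B) * transpose_mat B"

definition embed_rows :: "nat \<Rightarrow> nat \<Rightarrow> nat list \<Rightarrow> real mat \<Rightarrow> real mat" where
  "embed_rows n m T P = mat n m (\<lambda>(i,j). if i \<in> set T then P $$ (THE k. k < length T \<and> T ! k = i, j) else 0)"

definition gen_inv :: "real mat \<Rightarrow> real mat \<Rightarrow> bool" where
  "gen_inv A H \<longleftrightarrow> A * H * A = A"

definition reflexive_gen_inv :: "real mat \<Rightarrow> real mat \<Rightarrow> bool" where
  "reflexive_gen_inv A H \<longleftrightarrow> gen_inv A H \<and> H * A * H = H"

definition ah_symmetric :: "real mat \<Rightarrow> real mat \<Rightarrow> bool" where
  "ah_symmetric A H \<longleftrightarrow> transpose_mat (A * H) = A * H"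

definition norm1 :: "real mat \<Rightarrow> real" where
  "norm1 H = (\<Sum>i < dim_row H. \<Sum>j < dim_col H. \<bar>H $$ (i,j)\<bar>)"

end

theory Submission
  imports Defs
begin

(* Write B = A[S,T] and C = B^-1 A[S,:]. The columns of A[:,T] are independent because B is
   invertible, and since rank A = r they span the column space of A; reading off coordinates on
   the rows S gives the factorization A = A[:,T] C. By Cramer's rule each entry of C is a ratio
   det A[S,T'] / det B with T' obtained from T by one swap, so local maximality gives
   |C_kl| <= 1 + eps.
   Let H carry the pseudoinverse P of A[:,T] in the rows T and zeros elsewhere. Then
   A H = A[:,T] P is the orthogonal projector onto the column space of A, whence H is an
   ah-symmetric reflexive generalized inverse. Every ah-symmetric generalized inverse Hopt has
   the same projector A Hopt = A H; restricted to the rows S this reads B P = A[S,:] Hopt, i.e.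
   P = C Hopt, and the entry bound on C turns this into norm1 H = norm1 P <= r (1 + eps) norm1 Hopt. *)

lemma submat_carrier [simp]: "submat A S T \<in> carrier_mat (length S) (length T)"
  and dim_submat [simp]: "dim_row (submat A S T) = length S" "dim_col (submat A S T) = length T"
  and index_submat [simp]:
    "i < length S \<Longrightarrow> j < length T \<Longrightarrow> submat A S T $$ (i, j) = A $$ (S ! i, T ! j)"
  unfolding submat_def by auto

lemma dim_cols_sub [simp]: "dim_row (cols_sub A T) = dim_row A" "dim_col (cols_sub A T) = length T"
  and dim_rows_sub [simp]: "dim_row (rows_sub A S) = length S" "dim_col (rows_sub A S) = dim_col A"
  unfolding cols_sub_def rows_sub_def by simp_all

lemma cols_sub_carrier [simp]: "A \<in> carrier_mat m n \<Longrightarrow> cols_sub A T \<in> carrier_mat m (length T)"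
  and rows_sub_carrier [simp]: "A \<in> carrier_mat m n \<Longrightarrow> rows_sub A S \<in> carrier_mat (length S) n"
  by auto

lemma nth_in_range: "set S \<subseteq> {0..<m} \<Longrightarrow> i < length S \<Longrightarrow> S ! i < m"
  using nth_mem by fastforce

lemma rows_sub_cols_sub:
  assumes "set S \<subseteq> {0..<dim_row A}"
  shows "rows_sub (cols_sub A T) S = submat A S T"
  using nth_in_range[OF assms] by (intro eq_matI) (auto simp: rows_sub_def cols_sub_def)

lemma cols_sub_rows_sub:
  assumes "set T \<subseteq> {0..<dim_col A}"
  shows "cols_sub (rows_sub A S) T = submat A S T"
  using nth_in_range[OF assms] by (intro eq_matI) (auto simp: rows_sub_def cols_sub_def)

lemma rows_sub_mult:
  assumes X: "X \<in> carrier_mat m q" and Y: "Y \<in> carrier_mat q p" and S: "set S \<subseteq> {0..<m}"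
  shows "rows_sub (X * Y) S = rows_sub X S * Y"
  using assms nth_in_range[OF S] by (intro eq_matI) (auto simp: rows_sub_def scalar_prod_def)

lemma set_cols_cols_sub:
  assumes "set T \<subseteq> {0..<dim_col A}"
  shows "set (cols (cols_sub A T)) \<subseteq> set (cols A)"
proof
  fix v assume "v \<in> set (cols (cols_sub A T))"
  then obtain j where j: "j < length T" "v = col (cols_sub A T) j"
    by (auto simp: cols_sub_def in_set_conv_nth)
  moreover have Tj: "T ! j < dim_col A" using nth_in_range[OF assms j(1)] .
  ultimately have "v = col A (T ! j)" by (intro eq_vecI) (auto simp: cols_sub_def)
  with Tj show "v \<in> set (cols A)" by (simp add: cols_def)
qed

definition full_col_rank :: "'a::semiring_0 mat \<Rightarrow> bool" where
  "full_col_rank M \<longleftrightarrow>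
     (\<forall>v \<in> carrier_vec (dim_col M). M *\<^sub>v v = 0\<^sub>v (dim_row M) \<longrightarrow> v = 0\<^sub>v (dim_col M))"

lemma full_col_rankD:
  assumes "full_col_rank M" "M \<in> carrier_mat m p" "v \<in> carrier_vec p" "M *\<^sub>v v = 0\<^sub>v m"
  shows "v = 0\<^sub>v p"
  using assms unfolding full_col_rank_def by auto

lemma mult_mat_vec_unit_vec:
  fixes M :: "'a::semiring_1 mat"
  assumes "M \<in> carrier_mat m p" "i < p"
  shows "M *\<^sub>v unit_vec p i = col M i"
  using col_mult2[of M m p "1\<^sub>m p" p i] assms by (simp add: col_one right_mult_one_mat)

lemma distinct_cols_if_full_col_rank:
  fixes M :: "'a::ring_1 mat"
  assumes M: "M \<in> carrier_mat m p" and fcr: "full_col_rank M"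
  shows "distinct (cols M)"
proof (rule ccontr)
  assume "\<not> distinct (cols M)"
  then obtain i j where ij: "i \<noteq> j" "i < p" "j < p" "col M i = col M j"
    using M by (auto simp: distinct_conv_nth)
  define v :: "'a vec" where "v = unit_vec p i - unit_vec p j"
  have "M *\<^sub>v v = 0\<^sub>v m"
    using M ij by (simp add: v_def mult_minus_distrib_mat_vec mult_mat_vec_unit_vec)
  then have "v = 0\<^sub>v p"
    using full_col_rankD[OF fcr M] by (simp add: v_def)
  moreover have "v $ i = 1" using ij by (simp add: v_def)
  ultimately show False using ij by simp
qed

context vec_space
begin

lemma lin_indpt_cols_if_full_col_rank:
  assumes M: "M \<in> carrier_mat n p" and fcr: "full_col_rank M"
  shows "lin_indpt (set (cols M))"
proof
  assume "lin_dep (set (cols M))"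
  from lin_depE[OF M this distinct_cols_if_full_col_rank[OF M fcr]]
  obtain v where "v \<in> carrier_vec p" "v \<noteq> 0\<^sub>v p" "M *\<^sub>v v = 0\<^sub>v n" .
  with full_col_rankD[OF fcr M] show False by blast
qed

lemma col_in_range_if_rank_le:
  assumes A: "A \<in> carrier_mat n nc" and M: "M \<in> carrier_mat n p" and fcr: "full_col_rank M"
    and cols: "set (cols M) \<subseteq> set (cols A)" and rank: "rank A \<le> p"
    and l: "l < nc"
  obtains x where "x \<in> carrier_vec p" "col A l = M *\<^sub>v x"
proof -
  let ?U = "set (cols M)"
  have U: "?U \<subseteq> carrier_vec n" using M cols_dim by blast
  have indpt: "lin_indpt ?U" using lin_indpt_cols_if_full_col_rank[OF M fcr] .
  have a: "col A l \<in> set (cols A)" "col A l \<in> carrier_vec n"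
    using A l by (auto simp: cols_def)
  have "col A l \<in> span ?U"
  proof (rule ccontr)
    assume out: "col A l \<notin> span ?U"
    then have new: "col A l \<notin> ?U" using in_own_span[OF U] by blast
    with out have "lin_indpt (?U \<union> {col A l})"
      using lin_dep_iff_in_span[OF U indpt a(2)] by blast
    then have "card (?U \<union> {col A l}) \<le> p"
      using rank_ge_card_indpt[OF A, of "?U \<union> {col A l}"] cols a(1) rank by auto
    moreover have "card ?U = p"
      using distinct_card[OF distinct_cols_if_full_col_rank[OF M fcr]] M by simp
    ultimately show False using new by simp
  qed
  then show ?thesis using that col_space_eq[OF M] M unfolding col_space_def by auto
qed

end

lemma full_col_rank_if_left_invertible_rows:
  fixes M :: "'a::comm_ring_1 mat"
  assumes M: "M \<in> carrier_mat m p" and S: "set S \<subseteq> {0..<m}"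
    and Bi: "Bi \<in> carrier_mat p (length S)" "Bi * rows_sub M S = 1\<^sub>m p"
  shows "full_col_rank M"
  unfolding full_col_rank_def
proof (intro ballI impI)
  fix v assume v: "v \<in> carrier_vec (dim_col M)" and Mv: "M *\<^sub>v v = 0\<^sub>v (dim_row M)"
  have R: "rows_sub M S \<in> carrier_mat (length S) p" using M by simp
  have Rv: "rows_sub M S *\<^sub>v v = 0\<^sub>v (length S)"
  proof (rule eq_vecI)
    fix i assume "i < dim_vec (0\<^sub>v (length S) :: 'a vec)"
    then have i: "i < length S" "S ! i < m" using nth_in_range[OF S] by auto
    have "row (rows_sub M S) i = row M (S ! i)"
      using M i by (intro eq_vecI) (auto simp: rows_sub_def)
    then have "(rows_sub M S *\<^sub>v v) $ i = (M *\<^sub>v v) $ (S ! i)"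
      using M i by (simp add: rows_sub_def)
    then show "(rows_sub M S *\<^sub>v v) $ i = 0\<^sub>v (length S) $ i" using Mv M i by simp
  qed (simp add: rows_sub_def)
  have "v = (Bi * rows_sub M S) *\<^sub>v v" using Bi(2) v M by simp
  also have "\<dots> = Bi *\<^sub>v (rows_sub M S *\<^sub>v v)" using assoc_mult_mat_vec[OF Bi(1) R] v M by simp
  also have "\<dots> = 0\<^sub>v p" unfolding Rv using Bi(1) by (intro eq_vecI) (auto simp: scalar_prod_def)
  finally show "v = 0\<^sub>v (dim_col M)" using M by simp
qed

lemma factorization_through_cols_sub:
  fixes A :: "'a::field mat"
  assumes A: "A \<in> carrier_mat m n" and rank: "vec_space.rank m A \<le> length T"
    and S: "set S \<subseteq> {0..<m}" and T: "set T \<subseteq> {0..<n}"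
    and Bi: "Bi \<in> carrier_mat (length T) (length S)" "Bi * submat A S T = 1\<^sub>m (length T)"
  shows "A = cols_sub A T * (Bi * rows_sub A S)"
proof (rule mat_col_eqI)
  let ?F = "cols_sub A T"
  have F: "?F \<in> carrier_mat m (length T)" using A by simp
  have B: "submat A S T = rows_sub ?F S" using rows_sub_cols_sub[of S A T] S A by simp
  have fcr: "full_col_rank ?F"
    using full_col_rank_if_left_invertible_rows[OF F S Bi(1)] Bi(2) B by simp
  fix l assume "l < dim_col (?F * (Bi * rows_sub A S))"
  then have l: "l < n" using A by simp
  obtain x where x: "x \<in> carrier_vec (length T)" "col A l = ?F *\<^sub>v x"
    using vec_space.col_in_range_if_rank_le[OF A F fcr set_cols_cols_sub rank l] T A by auto
  have "col (rows_sub A S) l = submat A S T *\<^sub>v x"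
  proof (rule eq_vecI)
    fix i assume "i < dim_vec (submat A S T *\<^sub>v x)"
    then have i: "i < length S" "S ! i < m" using nth_in_range[OF S] by auto
    have "row (submat A S T) i = row ?F (S ! i)"
      using i A by (intro eq_vecI) (auto simp: cols_sub_def)
    then have "(submat A S T *\<^sub>v x) $ i = col A l $ (S ! i)"
      unfolding x(2) using i A by simp
    then show "col (rows_sub A S) l $ i = (submat A S T *\<^sub>v x) $ i"
      using i l A by (simp add: rows_sub_def)
  qed (simp add: rows_sub_def)
  then have "Bi *\<^sub>v col (rows_sub A S) l = x"
    using assoc_mult_mat_vec[OF Bi(1) submat_carrier[of A S T] x(1)] Bi(2) x(1) by simp
  then show "col A l = col (?F * (Bi * rows_sub A S)) l"
    using x(2) col_mult2[OF F _ l] col_mult2[OF Bi(1) _ l] A Bi(1) by simp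
qed (use A in auto)

lemma
  fixes B :: "real mat"
  assumes B: "B \<in> carrier_mat k k" and det: "det B \<noteq> 0"
  shows mat_inv_carrier: "mat_inv B \<in> carrier_mat k k"
    and mat_inv_right: "B * mat_inv B = 1\<^sub>m k"
    and mat_inv_left: "mat_inv B * B = 1\<^sub>m k"
proof -
  obtain Bi where "mat_inverse B = Some Bi"
    using mat_inverse(1)[OF B, of "()"] det_non_zero_imp_unit[OF B det, of "()"] by fastforce
  with mat_inverse(2)[OF B] show "mat_inv B \<in> carrier_mat k k" "B * mat_inv B = 1\<^sub>m k"
    "mat_inv B * B = 1\<^sub>m k" unfolding mat_inv_def by simp_all
qed

lemma transpose_mat_inv_symmetric:
  assumes B: "B \<in> carrier_mat k k" and det: "det B \<noteq> 0" and sym: "transpose_mat B = B"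
  shows "transpose_mat (mat_inv B) = mat_inv B"
proof -
  let ?Bi = "mat_inv B"
  have Bi: "?Bi \<in> carrier_mat k k" using mat_inv_carrier[OF B det] .
  have "transpose_mat ?Bi = transpose_mat ?Bi * (B * ?Bi)"
    using mat_inv_right[OF B det] Bi by simp
  also have "\<dots> = transpose_mat (B * ?Bi) * ?Bi"
    using B Bi sym by (simp add: assoc_mult_mat[of _ k k _ k _ k] transpose_mult[of B k k ?Bi k])
  also have "\<dots> = ?Bi" using mat_inv_right[OF B det] Bi by simp
  finally show ?thesis .
qed

lemma det_gram_nonzero:
  fixes M :: "real mat"
  assumes M: "M \<in> carrier_mat m p" and fcr: "full_col_rank M"
  shows "det (transpose_mat M * M) \<noteq> 0"
proof
  assume "det (transpose_mat M * M) = 0"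
  then obtain v where v: "v \<in> carrier_vec p" "v \<noteq> 0\<^sub>v p"
    and Gv: "(transpose_mat M * M) *\<^sub>v v = 0\<^sub>v p"
    using det_0_iff_vec_prod_zero_field[of "transpose_mat M * M" p] M by auto
  have Mv: "M *\<^sub>v v \<in> carrier_vec m" using M v by simp
  have "(M *\<^sub>v v) \<bullet> (M *\<^sub>v v) = (transpose_mat M *\<^sub>v (M *\<^sub>v v)) \<bullet> v"
    using transpose_vec_mult_scalar[OF M v(1) Mv] by simp
  also have "\<dots> = 0"
    using Gv assoc_mult_mat_vec[of "transpose_mat M" p m M p v] M v by simp
  finally have "M *\<^sub>v v = 0\<^sub>v m"
    using conjugate_square_eq_0_vec[OF Mv] by simp
  with full_col_rankD[OF fcr M v(1)] v(2) show False by simp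
qed

lemma
  fixes M :: "real mat"
  assumes M: "M \<in> carrier_mat m p" and fcr: "full_col_rank M"
  shows pinv_fcr_carrier: "pinv_fcr M \<in> carrier_mat p m"
    and pinv_fcr_left_inverse: "pinv_fcr M * M = 1\<^sub>m p"
    and symmetric_mult_pinv_fcr: "transpose_mat (M * pinv_fcr M) = M * pinv_fcr M"
proof -
  let ?G = "transpose_mat M * M"
  have G: "?G \<in> carrier_mat p p" and det: "det ?G \<noteq> 0"
    using M det_gram_nonzero[OF M fcr] by auto
  have Gi: "mat_inv ?G \<in> carrier_mat p p" using mat_inv_carrier[OF G det] .
  show "pinv_fcr M \<in> carrier_mat p m" unfolding pinv_fcr_def using Gi M by simp
  show "pinv_fcr M * M = 1\<^sub>m p"
    unfolding pinv_fcr_def using mat_inv_left[OF G det] Gi M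
    by (simp add: assoc_mult_mat[of _ p p _ m _ p])
  have "transpose_mat ?G = ?G" using M by (simp add: transpose_mult[of _ p m _ p])
  then have "transpose_mat (mat_inv ?G) = mat_inv ?G"
    using transpose_mat_inv_symmetric[OF G det] by simp
  then show "transpose_mat (M * pinv_fcr M) = M * pinv_fcr M"
    unfolding pinv_fcr_def using Gi M
    by (simp add: transpose_mult[of _ m p _ m] transpose_mult[of _ p p _ m] assoc_mult_mat[of _ m p _ p _ m])
qed

lemma sum_eq_sum_nth_if_zero_outside:
  fixes T :: "nat list"
  assumes "distinct T" "set T \<subseteq> {0..<n}" "\<And>l. l < n \<Longrightarrow> l \<notin> set T \<Longrightarrow> f l = 0"
  shows "(\<Sum>l<n. f l) = (\<Sum>k<length T. f (T ! k))"
proof -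
  have "(\<Sum>l<n. f l) = (\<Sum>l\<in>set T. f l)"
    using assms by (intro sum.mono_neutral_right) auto
  also have "\<dots> = (\<Sum>k<length T. f (T ! k))"
    using sum.reindex[of "(!) T" "{..<length T}" f] assms(1)
    by (simp add: inj_on_nth lessThan_atLeast0 nth_image)
  finally show ?thesis .
qed

lemma embed_rows_carrier [simp]: "embed_rows n m T P \<in> carrier_mat n m"
  and dim_embed_rows [simp]: "dim_row (embed_rows n m T P) = n" "dim_col (embed_rows n m T P) = m"
  unfolding embed_rows_def by simp_all

lemma index_embed_rows_nth:
  assumes "distinct T" "set T \<subseteq> {0..<n}" "k < length T" "j < m"
  shows "embed_rows n m T P $$ (T ! k, j) = P $$ (k, j)"
proof -
  have "(THE k'. k' < length T \<and> T ! k' = T ! k) = k"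
    using assms by (auto simp: nth_eq_iff_index_eq)
  then show ?thesis using assms nth_in_range[OF assms(2)] by (simp add: embed_rows_def)
qed

lemma index_embed_rows_notin:
  "i < n \<Longrightarrow> j < m \<Longrightarrow> i \<notin> set T \<Longrightarrow> embed_rows n m T P $$ (i, j) = 0"
  unfolding embed_rows_def by simp

lemma mult_embed_rows:
  assumes T: "distinct T" "set T \<subseteq> {0..<n}" and Z: "Z \<in> carrier_mat q n"
    and P: "P \<in> carrier_mat (length T) m"
  shows "Z * embed_rows n m T P = cols_sub Z T * P"
proof (rule eq_matI)
  fix i j assume "i < dim_row (cols_sub Z T * P)" "j < dim_col (cols_sub Z T * P)"
  then have ij: "i < q" "j < m" using Z P by auto
  have "(Z * embed_rows n m T P) $$ (i, j) = (\<Sum>l<n. Z $$ (i, l) * embed_rows n m T P $$ (l, j))"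
    using ij Z by (simp add: scalar_prod_def lessThan_atLeast0)
  also have "\<dots> = (\<Sum>k<length T. Z $$ (i, T ! k) * P $$ (k, j))"
    using T ij by (simp add: sum_eq_sum_nth_if_zero_outside index_embed_rows_notin index_embed_rows_nth)
  also have "\<dots> = (cols_sub Z T * P) $$ (i, j)"
    using ij Z P by (simp add: scalar_prod_def cols_sub_def lessThan_atLeast0)
  finally show "(Z * embed_rows n m T P) $$ (i, j) = (cols_sub Z T * P) $$ (i, j)" .
qed (use Z P in auto)

lemma embed_rows_mult:
  assumes T: "distinct T" "set T \<subseteq> {0..<n}"
    and P: "P \<in> carrier_mat (length T) m" and Y: "Y \<in> carrier_mat m p"
  shows "embed_rows n m T P * Y = embed_rows n p T (P * Y)"
proof (rule eq_matI)
  fix i j assume "i < dim_row (embed_rows n p T (P * Y))" "j < dim_col (embed_rows n p T (P * Y))"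
  then have ij: "i < n" "j < p" by auto
  show "(embed_rows n m T P * Y) $$ (i, j) = embed_rows n p T (P * Y) $$ (i, j)"
  proof (cases "i \<in> set T")
    case True
    then obtain k where k: "k < length T" "i = T ! k" by (auto simp: in_set_conv_nth)
    then show ?thesis
      using T ij P Y by (simp add: index_embed_rows_nth scalar_prod_def)
  next
    case False
    then show ?thesis using ij Y by (simp add: index_embed_rows_notin scalar_prod_def)
  qed
qed (use Y in auto)

lemma norm1_embed_rows:
  assumes T: "distinct T" "set T \<subseteq> {0..<n}" and P: "P \<in> carrier_mat (length T) m"
  shows "norm1 (embed_rows n m T P) = norm1 P"
  unfolding norm1_def using T P
  by (simp add: sum_eq_sum_nth_if_zero_outside index_embed_rows_notin index_embed_rows_nth)

lemma ah_symmetric_gen_inv_mult_unique: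
  assumes A: "A \<in> carrier_mat m n" and H1: "H1 \<in> carrier_mat n m" and H2: "H2 \<in> carrier_mat n m"
    and g1: "gen_inv A H1" and g2: "gen_inv A H2"
    and s1: "ah_symmetric A H1" and s2: "ah_symmetric A H2"
  shows "A * H1 = A * H2"
proof -
  have X: "A * H1 \<in> carrier_mat m m" and Y: "A * H2 \<in> carrier_mat m m" using A H1 H2 by auto
  have XY: "(A * H1) * (A * H2) = A * H2" and YX: "(A * H2) * (A * H1) = A * H1"
    using g1 g2 assoc_mult_mat[OF X A H2] assoc_mult_mat[OF Y A H1] unfolding gen_inv_def by simp_all
  have "A * H2 = transpose_mat ((A * H1) * (A * H2))" using XY s2 unfolding ah_symmetric_def by simp
  also have "\<dots> = A * H1"
    using transpose_mult[OF X Y] s1 s2 YX unfolding ah_symmetric_def by simp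
  finally show ?thesis by simp
qed

lemma ah_symmetric_reflexive_embed_pinv:
  fixes A C :: "real mat"
  assumes A: "A \<in> carrier_mat m n" and T: "distinct T" "set T \<subseteq> {0..<n}"
    and fcr: "full_col_rank (cols_sub A T)"
    and C: "C \<in> carrier_mat (length T) n" and factor: "A = cols_sub A T * C"
  shows "ah_symmetric A (embed_rows n m T (pinv_fcr (cols_sub A T)))
    \<and> reflexive_gen_inv A (embed_rows n m T (pinv_fcr (cols_sub A T)))"
proof -
  define F where "F = cols_sub A T"
  define P where "P = pinv_fcr F"
  define H where "H = embed_rows n m T P"
  let ?r = "length T"
  have F: "F \<in> carrier_mat m ?r" unfolding F_def using A by simp
  have P: "P \<in> carrier_mat ?r m" "P * F = 1\<^sub>m ?r" "transpose_mat (F * P) = F * P"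
    unfolding P_def using fcr pinv_fcr_carrier[OF F] pinv_fcr_left_inverse[OF F]
      symmetric_mult_pinv_fcr[OF F] by (auto simp: F_def)
  have AFC: "A = F * C" using factor unfolding F_def .
  have AH: "A * H = F * P" unfolding H_def F_def using mult_embed_rows[OF T A P(1)[unfolded F_def]] .
  have "A * H * A = (F * P) * (F * C)" using AH AFC by metis
  also have "\<dots> = F * ((P * F) * C)"
    using assoc_mult_mat[OF F P(1) mult_carrier_mat[OF F C]] assoc_mult_mat[OF P(1) F C] by simp
  also have "\<dots> = A" using P(2) C AFC by simp
  finally have AHA: "A * H * A = A" .
  have "H * A * H = H * (A * H)"
    unfolding H_def using assoc_mult_mat[OF embed_rows_carrier A embed_rows_carrier[of n m T P]] by simp
  also have "\<dots> = H * (F * P)" unfolding AH ..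
  also have "\<dots> = embed_rows n m T ((P * F) * P)"
    unfolding H_def using embed_rows_mult[OF T P(1), of "F * P" m] F P(1)
    by (simp add: assoc_mult_mat[of P ?r m F ?r P m])
  finally have HAH: "H * A * H = H" unfolding H_def using P(1,2) by simp
  show ?thesis
    using AH AHA HAH P(3) unfolding ah_symmetric_def reflexive_gen_inv_def gen_inv_def H_def P_def F_def
    by simp
qed

lemma embed_rows_block_eq:
  fixes A P Hopt :: "real mat"
  assumes A: "A \<in> carrier_mat m n" and S: "set S \<subseteq> {0..<m}"
    and T: "distinct T" "set T \<subseteq> {0..<n}"
    and Bi: "Bi \<in> carrier_mat (length T) (length S)" "Bi * submat A S T = 1\<^sub>m (length T)"
    and P: "P \<in> carrier_mat (length T) m"
    and H: "gen_inv A (embed_rows n m T P)" "ah_symmetric A (embed_rows n m T P)"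
    and Hopt: "Hopt \<in> carrier_mat n m" "gen_inv A Hopt" "ah_symmetric A Hopt"
  shows "P = Bi * rows_sub A S * Hopt"
proof -
  let ?H = "embed_rows n m T P" and ?R = "rows_sub A S"
  have R: "?R \<in> carrier_mat (length S) n" using A by simp
  have "?R * Hopt = rows_sub (A * Hopt) S" using rows_sub_mult[OF A Hopt(1) S] ..
  also have "\<dots> = rows_sub (A * ?H) S"
    using ah_symmetric_gen_inv_mult_unique[OF A Hopt(1) embed_rows_carrier Hopt(2) H(1) Hopt(3) H(2)]
    by simp
  also have "\<dots> = submat A S T * P"
    using rows_sub_mult[OF A embed_rows_carrier S] mult_embed_rows[OF T R P] cols_sub_rows_sub[of T A S] A T
    by simp
  finally have RH: "?R * Hopt = submat A S T * P" .
  have "P = (Bi * submat A S T) * P" using Bi(2) P by simp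
  also have "\<dots> = Bi * (?R * Hopt)" unfolding RH using Bi(1) P
    by (simp add: assoc_mult_mat[OF Bi(1) submat_carrier[of A S T] P])
  also have "\<dots> = Bi * ?R * Hopt" using Bi(1) R Hopt(1) by (simp add: assoc_mult_mat)
  finally show ?thesis .
qed

lemma norm1_mult_le:
  fixes C H :: "real mat"
  assumes C: "C \<in> carrier_mat r n" and H: "H \<in> carrier_mat n m"
    and bound: "\<And>k l. k < r \<Longrightarrow> l < n \<Longrightarrow> \<bar>C $$ (k, l)\<bar> \<le> c"
  shows "norm1 (C * H) \<le> real r * c * norm1 H"
proof -
  have "norm1 (C * H) = (\<Sum>k<r. \<Sum>j<m. \<bar>\<Sum>l<n. C $$ (k, l) * H $$ (l, j)\<bar>)"
    unfolding norm1_def using C H by (simp add: scalar_prod_def lessThan_atLeast0)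
  also have "\<dots> \<le> (\<Sum>k<r. \<Sum>j<m. \<Sum>l<n. c * \<bar>H $$ (l, j)\<bar>)"
  proof (intro sum_mono)
    fix k j assume "k \<in> {..<r}"
    then have "\<bar>C $$ (k, l) * H $$ (l, j)\<bar> \<le> c * \<bar>H $$ (l, j)\<bar>" if "l < n" for l
      using bound that by (simp add: abs_mult mult_right_mono)
    then show "\<bar>\<Sum>l<n. C $$ (k, l) * H $$ (l, j)\<bar> \<le> (\<Sum>l<n. c * \<bar>H $$ (l, j)\<bar>)"
      by (intro order_trans[OF sum_abs] sum_mono) auto
  qed
  also have "\<dots> = real r * c * norm1 H"
    unfolding norm1_def using H by (simp add: sum_distrib_left sum.swap[of _ "{..<m}"] mult.assoc)
  finally show ?thesis .
qed

lemma norm1_embed_rows_le: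
  fixes A P Hopt :: "real mat"
  assumes A: "A \<in> carrier_mat m n" and S: "set S \<subseteq> {0..<m}"
    and T: "distinct T" "set T \<subseteq> {0..<n}"
    and Bi: "Bi \<in> carrier_mat (length T) (length S)" "Bi * submat A S T = 1\<^sub>m (length T)"
    and P: "P \<in> carrier_mat (length T) m"
    and H: "gen_inv A (embed_rows n m T P)" "ah_symmetric A (embed_rows n m T P)"
    and Hopt: "Hopt \<in> carrier_mat n m" "gen_inv A Hopt" "ah_symmetric A Hopt"
    and bound: "\<And>k l. k < length T \<Longrightarrow> l < n \<Longrightarrow> \<bar>(Bi * rows_sub A S) $$ (k, l)\<bar> \<le> c"
  shows "norm1 (embed_rows n m T P) \<le> real (length T) * c * norm1 Hopt"
proof -
  have "norm1 (embed_rows n m T P) = norm1 (Bi * rows_sub A S * Hopt)"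
    using norm1_embed_rows[OF T P] embed_rows_block_eq[OF A S T Bi P H Hopt] by simp
  also have "\<dots> \<le> real (length T) * c * norm1 Hopt"
    using Bi(1) A by (intro norm1_mult_le[OF _ Hopt(1)] bound) auto
  finally show ?thesis .
qed

lemma local_max_det_coeff_bound:
  fixes A :: "real mat"
  assumes A: "A \<in> carrier_mat m n" and len: "length S = length T"
    and loc: "local_max_det eps A S T" and eps: "eps \<ge> 0"
    and k: "k < length T" and l: "l < n"
  shows "\<bar>(mat_inv (submat A S T) * rows_sub A S) $$ (k, l)\<bar> \<le> 1 + eps"
proof -
  let ?r = "length T" and ?B = "submat A S T"
  have B: "?B \<in> carrier_mat ?r ?r" using submat_carrier[of A S T] len by simp
  have det: "det ?B \<noteq> 0" using loc unfolding local_max_det_def by simp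
  note Bi = mat_inv_carrier[OF B det] mat_inv_left[OF B det] mat_inv_right[OF B det]
  have R: "rows_sub A S \<in> carrier_mat ?r n" using rows_sub_carrier[OF A, of S] len by simp
  define a where "a = col (rows_sub A S) l"
  define c where "c = mat_inv ?B *\<^sub>v a"
  have a: "a \<in> carrier_vec ?r" unfolding a_def using R l by simp
  have c: "c \<in> carrier_vec ?r" using Bi(1) a unfolding c_def by simp
  have entry: "(mat_inv ?B * rows_sub A S) $$ (k, l) = c $ k"
    unfolding c_def a_def using Bi(1) R k l by (subst index_mult_mat(1)) auto
  have Bc: "?B *\<^sub>v c = a"
    unfolding c_def using assoc_mult_mat_vec[OF B Bi(1) a, symmetric] Bi(3) a by simp
  show ?thesis
  proof (cases "l \<in> set T")
    case True
    then obtain k' where k': "k' < ?r" "l = T ! k'" by (auto simp: in_set_conv_nth)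
    have "a = col ?B k'" unfolding a_def using k' A len l by (intro eq_vecI) (auto simp: rows_sub_def)
    then have "c = col (mat_inv ?B * ?B) k'" unfolding c_def using col_mult2[OF Bi(1) B k'(1)] by simp
    then have "c $ k = (if k = k' then 1 else 0)" using Bi(2) k k' by simp
    then show ?thesis using entry eps by simp
  next
    case False
    have "replace_col ?B a k = submat A S (T[k := l])"
      unfolding a_def using k l len A
      by (intro eq_matI) (auto simp: replace_col_def nth_list_update rows_sub_def)
    then have "det (submat A S (T[k := l])) = c $ k * det ?B"
      using cramer_lemma_mat[OF B c k] Bc by simp
    moreover have "\<bar>det (submat A S (T[k := l]))\<bar> \<le> (1 + eps) * \<bar>det ?B\<bar>"
      using loc False k l A unfolding local_max_det_def by blast
    ultimately have "\<bar>c $ k\<bar> * \<bar>det ?B\<bar> \<le> (1 + eps) * \<bar>det ?B\<bar>" by (simp add: abs_mult)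
    then show ?thesis using entry det by simp
  qed
qed

theorem theorem3p7:
  fixes A :: "real mat" and m n r :: nat and S T :: "nat list" and eps :: real
  assumes A: "A \<in> carrier_mat m n"
    and rank: "vec_space.rank m A = r" and r1: "r \<ge> 1"
    and S: "ordered_subset S r m" and Sind: "rows_lin_indep A S"
    and eps: "eps \<ge> 0"
    and T: "ordered_subset T r n" and loc: "local_max_det eps A S T"
  shows "ah_symmetric A (embed_rows n m T (pinv_fcr (cols_sub A T)))
       \<and> reflexive_gen_inv A (embed_rows n m T (pinv_fcr (cols_sub A T)))
       \<and> (\<forall>Hopt \<in> carrier_mat n m. ah_symmetric A Hopt \<and> reflexive_gen_inv A Hopt
            \<longrightarrow> norm1 (embed_rows n m T (pinv_fcr (cols_sub A T))) \<le> real r * (1 + eps) * norm1 Hopt)"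
proof -
  \<comment> \<open>\<open>rows_lin_indep A S\<close> and \<open>r \<ge> 1\<close> are implied by \<open>det A[S,T] \<noteq> 0\<close> and not needed;
    of \<open>Hopt\<close> only \<open>A Hopt A = A\<close> and ah-symmetry are used.\<close>
  from S T have lS: "length S = length T" and Sm: "set S \<subseteq> {0..<m}"
    and r: "r = length T" and dT: "distinct T" and Tn: "set T \<subseteq> {0..<n}"
    unfolding ordered_subset_def by auto
  let ?B = "submat A S T" and ?F = "cols_sub A T"
  let ?C = "mat_inv ?B * rows_sub A S" and ?P = "pinv_fcr ?F"
  have B: "?B \<in> carrier_mat (length T) (length T)" "det ?B \<noteq> 0"
    using submat_carrier[of A S T] lS loc unfolding local_max_det_def by auto
  have Bi: "mat_inv ?B \<in> carrier_mat (length T) (length S)" "mat_inv ?B * ?B = 1\<^sub>m (length T)"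
    using mat_inv_carrier[OF B] mat_inv_left[OF B] lS by simp_all
  have fcr: "full_col_rank ?F"
    using full_col_rank_if_left_invertible_rows[OF cols_sub_carrier[OF A] Sm] Bi
      rows_sub_cols_sub[of S A T] carrier_matD[OF A] Sm by simp
  have C: "?C \<in> carrier_mat (length T) n" using Bi(1) A by simp
  have "A = ?F * ?C" using factorization_through_cols_sub[OF A _ Sm Tn Bi] rank r by simp
  note H = ah_symmetric_reflexive_embed_pinv[OF A dT Tn fcr C this]
  have P: "?P \<in> carrier_mat (length T) m" using pinv_fcr_carrier[OF cols_sub_carrier[OF A] fcr] .
  have "norm1 (embed_rows n m T ?P) \<le> real r * (1 + eps) * norm1 Hopt"
    if "Hopt \<in> carrier_mat n m" "ah_symmetric A Hopt" "reflexive_gen_inv A Hopt" for Hopt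
    using norm1_embed_rows_le[OF A Sm dT Tn Bi P] local_max_det_coeff_bound[OF A lS loc eps]
      H that r unfolding reflexive_gen_inv_def by simp
  with H show ?thesis by blast
qed

end
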